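(* For every probability distribution $P^0\in\Delta^{n-1}_+$ there exists a neighbourhood $U$ of $P^0$ in $\mathbb{R}^n$ such that $$\bigl(P^0+\mathbf{Q}(P^0,P^* )\bigr)\cap U=\Phi(P^0)\cap U .$$
   Context: Fix $n\ge 2$ and a positive equilibrium distribution $P^*=(p^*_i)$, $p^*_i>0$, $\sum_i p^*_i=1$. Let $\Delta^{n-1}_+=\{P=(p_i)\in\mathbb{R}^n: p_i>0,\ \sum_i p_i=1\}$. For $i\neq j$ let $\gamma^{ji}\in\mathbb{R}^n$ be the vector with $\gamma^{ji}_j=-1$, $\gamma^{ji}_i=1$ and all other coordinates $0$. ${\rm cone}$ denotes the set of all linear combinations with non-negative coefficients; ${\rm sign}$ is the three-valued sign function. Define $$\mathbf{Q}(P,P^* )={\rm cone}\Bigl\{\gamma^{ji}\,{\rm sign}\Bigl(\tfrac{p_j}{p^*_j}-\tfrac{p_i}{p^*_i}\Bigr)\ :\ 1\le j<i\le n\Bigr\}.$$ $\mathcal{K}$ is the class of all ODE systems $$\frac{dP}{dt}=\sum_{i>j} w^*_{ij}\Bigl(\frac{p_j}{p^*_j}-\frac{p_i}{p^*_i}\Bigr)\gamma^{ji}$$ with arbitrary constants $w^*_{ij}\ge 0$ (Kolmogorov equations of Markov chains with detailed balance and equilibrium $P^*$). $\Phi(P^0)$ is the set of all values $P(t)$, $t>0$, of solutions with $P(0)=P^0$ of all systems in $\mathcal{K}$. *)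

theory Defs
  imports "HOL-Analysis.Analysis"
begin

text \<open>Coordinates of R^n are indexed by a finite linearly ordered type 'n
  (playing the role of {1..n} with its usual order).\<close>

definition gam :: "('n::{finite,linorder}) \<Rightarrow> 'n \<Rightarrow> (real, 'n) vec" where
  "gam j i = (\<chi> k. if k = i then 1 else if k = j then -1 else 0)"

definition simplex_pos :: "((real, 'n::{finite,linorder}) vec) set" where
  "simplex_pos = {P. (\<forall>i. P $ i > 0) \<and> (\<Sum>i\<in>UNIV. P $ i) = 1}"

definition Qcone :: "((real, 'n::{finite,linorder}) vec) \<Rightarrow> (real, 'n) vec \<Rightarrow> ((real, 'n) vec) set" where
  "Qcone P Ps = {(\<Sum>(j,i)\<in>{(j,i). j < i}. c j i *\<^sub>R
        (sgn (P $ j / Ps $ j - P $ i / Ps $ i) *\<^sub>R gam j i)) | c.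
        \<forall>j i. j < i \<longrightarrow> c j i \<ge> 0}"

text \<open>Right-hand side of the Kolmogorov equation with weights w i j = w*_{ij}, i > j.\<close>
definition kfield :: "(('n::{finite,linorder}) \<Rightarrow> 'n \<Rightarrow> real) \<Rightarrow> (real, 'n) vec \<Rightarrow> (real, 'n) vec \<Rightarrow> (real, 'n) vec" where
  "kfield w Ps P = (\<Sum>(j,i)\<in>{(j,i). j < i}.
        (w i j * (P $ j / Ps $ j - P $ i / Ps $ i)) *\<^sub>R gam j i)"

definition Phi :: "((real, 'n::{finite,linorder}) vec) \<Rightarrow> (real, 'n) vec \<Rightarrow> ((real, 'n) vec) set" where
  "Phi Ps P0 = {x. \<exists>w P t. (\<forall>i j. j < i \<longrightarrow> w i j \<ge> 0) \<and> P 0 = P0 \<and>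
        (\<forall>s\<ge>0. (P has_vector_derivative kfield w Ps (P s)) (at s within {0..})) \<and>
        t > 0 \<and> x = P t}"

end

theory Submission
  imports Defs
begin

text \<open>Write \<open>x\<^sub>k = p\<^sup>0\<^sub>k / p*\<^sub>k\<close>. A vector lies in the cone \<open>Q(P\<^sup>0, P*)\<close> iff it is a non-negative
  combination of transfers of mass from states with larger \<open>x\<close> to states with smaller \<open>x\<close>, i.e.
  iff it is balanced and no set of states that is closed upwards in \<open>x\<close> gains mass.

  Along every Kolmogorov equation with detailed balance the functionals
  \<open>\<Sum>\<^sub>k p*\<^sub>k \<phi>(p\<^sub>k / p*\<^sub>k)\<close> with convex \<open>\<phi>\<close> do not increase. Taking \<open>\<phi>\<close> linear and \<open>\<phi>\<close> the
  hinges \<open>max 0 (y - c)\<close> shows that \<open>P(t) - P\<^sup>0\<close> lies in the cone as long as no ratio has moved by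
  half the smallest gap between distinct values of \<open>x\<close>.

  Conversely, the small point \<open>P\<^sup>0 + \<Sum> c\<^sub>j\<^sub>i sgn(x\<^sub>j - x\<^sub>i) \<gamma>\<^sup>j\<^sup>i\<close> of the cone is reached at time 1 by
  the linear equation whose weights solve \<open>w\<^sub>i\<^sub>j (y\<^sub>j/p*\<^sub>j - y\<^sub>i/p*\<^sub>i) = c\<^sub>j\<^sub>i sgn(x\<^sub>j - x\<^sub>i)\<close>, where
  \<open>y\<close> is the time average of its solution over \<open>[0, 1]\<close>. For small \<open>c\<close> the average \<open>y\<close> stays so
  close to \<open>P\<^sup>0\<close> that these equations have non-negative solutions, and Brouwer's fixed point
  theorem makes them consistent.\<close>

section \<open>Transfers of mass and the cone \<open>Q\<close>\<close>

lemma gam_nth [simp]: "gam j i $ l = (if l = i then 1 else if l = j then -1 else 0)"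
  by (simp add: gam_def)

lemma gam_swap: "j \<noteq> i \<Longrightarrow> gam i j = - gam j i"
  by (auto simp: vec_eq_iff)

lemma sum_gam:
  assumes "j \<noteq> i"
  shows "(\<Sum>l\<in>S. gam j i $ l) = of_bool (i \<in> S) - of_bool (j \<in> S)"
proof -
  have "(\<Sum>l\<in>S. gam j i $ l) = (\<Sum>l\<in>S. (if l = i then 1 else 0) - (if l = j then 1 else 0))"
    using assms by (intro sum.cong) auto
  then show ?thesis
    by (simp add: sum_subtractf)
qed

lemma sum_gam_combination:
  "(\<Sum>l\<in>S. (\<Sum>(j,i)\<in>{(j,i). j < i}. a j i *\<^sub>R gam j i) $ l)
     = (\<Sum>(j,i)\<in>{(j,i). j < i}. a j i * (of_bool (i \<in> S) - of_bool (j \<in> S)))"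
proof -
  have "(\<Sum>l\<in>S. (\<Sum>(j,i)\<in>{(j,i). j < i}. a j i *\<^sub>R gam j i) $ l)
      = (\<Sum>(j,i)\<in>{(j,i). j < i}. a j i * (\<Sum>l\<in>S. gam j i $ l))"
    by (simp add: sum_component case_prod_unfold sum_distrib_left sum.swap[of _ S])
  also have "\<dots> = (\<Sum>(j,i)\<in>{(j,i). j < i}. a j i * (of_bool (i \<in> S) - of_bool (j \<in> S)))"
    by (intro sum.cong refl) (auto simp: sum_gam simp del: gam_nth)
  finally show ?thesis .
qed

definition up_closed :: "('n \<Rightarrow> real) \<Rightarrow> 'n set \<Rightarrow> bool" where
  "up_closed x S \<longleftrightarrow> (\<forall>k\<in>S. \<forall>l. x k < x l \<longrightarrow> l \<in> S)"

definition downhill :: "('n::finite \<Rightarrow> real) \<Rightarrow> (real, 'n) vec \<Rightarrow> bool" where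
  "downhill x v \<longleftrightarrow> (\<Sum>k\<in>UNIV. v $ k) = 0 \<and> (\<forall>S. up_closed x S \<longrightarrow> (\<Sum>k\<in>S. v $ k) \<le> 0)"

text \<open>Only up-closed sets containing \<open>a\<close> but not \<open>b\<close> gain mass; such a set either lies strictly
  above \<open>b\<close>, where \<open>v\<close> has no positive entries, or stays up-closed when \<open>b\<close> is added.\<close>
lemma downhill_minus_transfer:
  fixes x :: "'n::{finite,linorder} \<Rightarrow> real"
  assumes v: "downhill x v" and b_top: "\<And>k. 0 < v $ k \<Longrightarrow> x k \<le> x b"
    and "x b < x a" "0 < m" "m \<le> v $ b" "m \<le> - v $ a"
  shows "downhill x (v - m *\<^sub>R gam a b)"
  unfolding downhill_def
proof (intro conjI allI impI)
  have sum0: "(\<Sum>k\<in>UNIV. v $ k) = 0" and up: "\<And>S. up_closed x S \<Longrightarrow> (\<Sum>k\<in>S. v $ k) \<le> 0"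
    using v by (auto simp: downhill_def)
  have sum_step: "(\<Sum>l\<in>S. (v - m *\<^sub>R gam a b) $ l) = (\<Sum>l\<in>S. v $ l) - m * (of_bool (b \<in> S) - of_bool (a \<in> S))"
    for S
  proof -
    have "a \<noteq> b"
      using \<open>x b < x a\<close> by auto
    then show ?thesis
      by (simp add: sum_subtractf sum_distrib_left[symmetric] sum_gam del: gam_nth)
  qed
  show "(\<Sum>l\<in>UNIV. (v - m *\<^sub>R gam a b) $ l) = 0"
    using sum_step[of UNIV] sum0 by simp
  fix S
  assume S: "up_closed x S"
  show "(\<Sum>l\<in>S. (v - m *\<^sub>R gam a b) $ l) \<le> 0"
  proof (cases "a \<in> S \<and> b \<notin> S")
    case False
    then show ?thesis
      using sum_step[of S] up[OF S] \<open>0 < m\<close> by auto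
  next
    case True
    then have "a \<in> S" "b \<notin> S"
      by auto
    have "(\<Sum>l\<in>S. v $ l) \<le> - m"
    proof (cases "\<forall>l\<in>S. x b < x l")
      case True
      have "v $ l \<le> 0" if "l \<in> S" for l
        using b_top[of l] True that by force
      then have "(\<Sum>l\<in>S - {a}. v $ l) \<le> 0"
        by (intro sum_nonpos) auto
      moreover have "(\<Sum>l\<in>S. v $ l) = v $ a + (\<Sum>l\<in>S - {a}. v $ l)"
        using \<open>a \<in> S\<close> by (intro sum.remove) auto
      ultimately show ?thesis
        using \<open>m \<le> - v $ a\<close> by linarith
    next
      case False
      then obtain l where "l \<in> S" "x l \<le> x b"
        by (auto simp: not_less)
      then have "up_closed x (insert b S)"
        using S unfolding up_closed_def by (metis insert_iff le_less_trans)
      then have "v $ b + (\<Sum>l\<in>S. v $ l) \<le> 0"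
        using up[of "insert b S"] \<open>b \<notin> S\<close> by simp
      then show ?thesis
        using \<open>m \<le> v $ b\<close> by linarith
    qed
    then show ?thesis
      using sum_step[of S] True by simp
  qed
qed

lemma downhill_transfer_step:
  fixes x :: "'n::{finite,linorder} \<Rightarrow> real"
  assumes v: "downhill x v" and "v \<noteq> 0"
  obtains a b m where "x b < x a" "0 < m" "m \<le> v $ b" "m \<le> - v $ a" "v $ b = m \<or> v $ a = - m"
    "downhill x (v - m *\<^sub>R gam a b)"
proof -
  have sum0: "(\<Sum>k\<in>UNIV. v $ k) = 0" and up: "\<And>S. up_closed x S \<Longrightarrow> (\<Sum>k\<in>S. v $ k) \<le> 0"
    using v by (auto simp: downhill_def)
  have "\<exists>k. v $ k > 0"
  proof (rule ccontr)
    assume "\<not> (\<exists>k. v $ k > 0)"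
    then have "\<forall>k\<in>UNIV. - v $ k = 0"
      using sum0 sum_nonneg_eq_0_iff[of UNIV "\<lambda>k. - v $ k"] by (simp add: sum_negf not_less)
    then have "v = 0"
      by (simp add: vec_eq_iff)
    with \<open>v \<noteq> 0\<close> show False ..
  qed
  then have "Max (x ` {k. v $ k > 0}) \<in> x ` {k. v $ k > 0}"
    by (intro Max_in) auto
  then obtain b where vb: "v $ b > 0" and xb: "x b = Max (x ` {k. v $ k > 0})"
    by auto
  have b_top: "x k \<le> x b" if "v $ k > 0" for k
    unfolding xb using that by (intro Max_ge) auto
  have "(\<Sum>l\<in>{l. x b < x l}. v $ l) + v $ b = (\<Sum>l\<in>{l. x b < x l} \<union> {b}. v $ l)"
    by (subst sum.union_disjoint) auto
  also have "\<dots> \<le> 0"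
    by (rule up) (auto simp: up_closed_def)
  finally have "(\<Sum>l\<in>{l. x b < x l}. v $ l) < 0"
    using vb by linarith
  then obtain a where xa: "x b < x a" and va: "v $ a < 0"
    by (metis (mono_tags, lifting) mem_Collect_eq not_less sum_nonneg)
  define m where "m = min (v $ b) (- v $ a)"
  have m: "0 < m" "m \<le> v $ b" "m \<le> - v $ a" "v $ b = m \<or> v $ a = - m"
    using va vb by (auto simp: m_def)
  show ?thesis
    by (rule that[OF xa m downhill_minus_transfer[OF v b_top xa m(1-3)]])
qed

lemma downhill_flow_decomposition:
  fixes x :: "'n::{finite,linorder} \<Rightarrow> real"
  assumes "downhill x v"
  shows "\<exists>f. (\<forall>a b. 0 \<le> f a b) \<and> (\<forall>a b. f a b \<noteq> 0 \<longrightarrow> x b < x a) \<and>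
    v = (\<Sum>(a,b)\<in>UNIV. f a b *\<^sub>R gam a b) \<and> (\<Sum>(a,b)\<in>UNIV. f a b) \<le> (\<Sum>k\<in>UNIV. \<bar>v $ k\<bar>)"
  using assms
proof (induction "card {k. v $ k \<noteq> 0}" arbitrary: v rule: less_induct)
  case less
  show ?case
  proof (cases "v = 0")
    case True
    then show ?thesis
      by (intro exI[of _ "\<lambda>_ _. 0"]) simp
  next
    case False
    obtain a b m where xab: "x b < x a" and m: "0 < m" "m \<le> v $ b" "m \<le> - v $ a"
      and m_zero: "v $ b = m \<or> v $ a = - m" and step: "downhill x (v - m *\<^sub>R gam a b)"
      using downhill_transfer_step[OF less.prems False] by blast
    define v' where "v' = v - m *\<^sub>R gam a b"
    have ab: "a \<noteq> b"
      using xab by auto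
    have v'_nth: "v' $ l = (if l = b then v $ b - m else if l = a then v $ a + m else v $ l)" for l
      using ab by (simp add: v'_def)
    have "{k. v' $ k \<noteq> 0} \<subseteq> {k. v $ k \<noteq> 0}"
      using m by (auto simp: v'_nth)
    moreover have "v' $ b = 0 \<or> v' $ a = 0" "v $ b \<noteq> 0" "v $ a \<noteq> 0"
      using m m_zero ab by (auto simp: v'_nth)
    ultimately have "{k. v' $ k \<noteq> 0} \<subset> {k. v $ k \<noteq> 0}"
      by blast
    then have "card {k. v' $ k \<noteq> 0} < card {k. v $ k \<noteq> 0}"
      by (simp add: psubset_card_mono)
    then obtain f where f_nonneg: "\<forall>a b. 0 \<le> f a b" and f_down: "\<forall>a b. f a b \<noteq> 0 \<longrightarrow> x b < x a"
      and f_sum: "v' = (\<Sum>(a,b)\<in>UNIV. f a b *\<^sub>R gam a b)"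
      and f_mass: "(\<Sum>(a,b)\<in>UNIV. f a b) \<le> (\<Sum>k\<in>UNIV. \<bar>v' $ k\<bar>)"
      using less.hyps[OF _ step[folded v'_def]] by blast
    define f' where "f' = (\<lambda>a' b'. f a' b' + (if (a', b') = (a, b) then m else 0))"
    have "(\<Sum>(a',b')\<in>UNIV. f' a' b' *\<^sub>R gam a' b')
        = (\<Sum>(a',b')\<in>UNIV. f a' b' *\<^sub>R gam a' b') + (\<Sum>p\<in>UNIV. if p = (a, b) then m *\<^sub>R gam a b else 0)"
      unfolding sum.distrib[symmetric]
      by (intro sum.cong) (auto simp: f'_def scaleR_add_left split: if_splits)
    then have "(\<Sum>(a',b')\<in>UNIV. f' a' b' *\<^sub>R gam a' b') = v' + m *\<^sub>R gam a b"
      by (simp add: f_sum)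
    then have "v = (\<Sum>(a',b')\<in>UNIV. f' a' b' *\<^sub>R gam a' b')"
      by (simp add: v'_def)
    have mass_f': "(\<Sum>(a',b')\<in>UNIV. f' a' b') = (\<Sum>(a',b')\<in>UNIV. f a' b') + m"
    proof -
      have "(\<Sum>(a',b')\<in>UNIV. f' a' b')
          = (\<Sum>(a',b')\<in>UNIV. f a' b') + (\<Sum>p\<in>UNIV. if p = (a, b) then m else 0)"
        unfolding sum.distrib[symmetric] by (intro sum.cong) (auto simp: f'_def split: if_splits)
      then show ?thesis
        by simp
    qed
    have mass_v': "(\<Sum>k\<in>UNIV. \<bar>v' $ k\<bar>) = (\<Sum>k\<in>UNIV. \<bar>v $ k\<bar>) - 2 * m"
    proof -
      have "\<bar>v' $ l\<bar> = \<bar>v $ l\<bar> - ((if l = b then m else 0) + (if l = a then m else 0))" for l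
        using m ab by (auto simp: v'_nth)
      then show ?thesis
        by (simp add: sum_subtractf sum.distrib)
    qed
    have f'_nonneg: "\<forall>a' b'. 0 \<le> f' a' b'" and f'_down: "\<forall>a' b'. f' a' b' \<noteq> 0 \<longrightarrow> x b' < x a'"
      using f_nonneg f_down m xab by (auto simp: f'_def)
    have "(\<Sum>(a',b')\<in>UNIV. f' a' b') \<le> (\<Sum>k\<in>UNIV. \<bar>v $ k\<bar>)"
      using mass_f' mass_v' f_mass m by linarith
    with \<open>v = _\<close> f'_nonneg f'_down show ?thesis
      by blast
  qed
qed

lemma sum_UNIV_pairs_split:
  fixes g :: "'n::{finite,linorder} \<times> 'n \<Rightarrow> 'a::comm_monoid_add"
  assumes "\<And>a. g (a, a) = 0"
  shows "(\<Sum>p\<in>UNIV. g p) = (\<Sum>(j,i)\<in>{(j,i). j < i}. g (j, i) + g (i, j))"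
proof -
  let ?A = "{(j,i). j < i} :: ('n \<times> 'n) set"
  have UNIV_split: "UNIV = (?A \<union> prod.swap ` ?A) \<union> {p. fst p = snd p}"
  proof (rule set_eqI)
    fix p :: "'n \<times> 'n"
    show "p \<in> UNIV \<longleftrightarrow> p \<in> (?A \<union> prod.swap ` ?A) \<union> {p. fst p = snd p}"
      by (cases p; cases "fst p" "snd p" rule: linorder_cases) (auto simp: image_iff)
  qed
  have "(\<Sum>p\<in>UNIV. g p) = (\<Sum>p\<in>?A \<union> prod.swap ` ?A. g p) + (\<Sum>p\<in>{p. fst p = snd p}. g p)"
    by (subst UNIV_split, rule sum.union_disjoint) auto
  also have "(\<Sum>p\<in>{p. fst p = snd p}. g p) = 0"
    using assms by (intro sum.neutral) auto
  also have "(\<Sum>p\<in>?A \<union> prod.swap ` ?A. g p) = (\<Sum>p\<in>?A. g p) + (\<Sum>p\<in>?A. g (prod.swap p))"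
    by (subst sum.union_disjoint) (auto simp: sum.reindex inj_on_def)
  finally show ?thesis
    by (simp add: sum.distrib case_prod_unfold prod.swap_def)
qed

lemma flow_eq_cone_sum:
  fixes x :: "'n::{finite,linorder} \<Rightarrow> real"
  assumes down: "\<And>a b. f a b \<noteq> 0 \<Longrightarrow> x b < x a"
  shows "(\<Sum>(a,b)\<in>UNIV. f a b *\<^sub>R gam a b)
    = (\<Sum>(j,i)\<in>{(j,i). j < i}. (f j i + f i j) *\<^sub>R (sgn (x j - x i) *\<^sub>R gam j i))"
proof -
  have "(\<Sum>(a,b)\<in>UNIV. f a b *\<^sub>R gam a b)
      = (\<Sum>(j,i)\<in>{(j,i). j < i}. f j i *\<^sub>R gam j i + f i j *\<^sub>R gam i j)"
    using down[of a a for a] by (subst sum_UNIV_pairs_split) (auto simp: case_prod_unfold)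
  also have "\<dots> = (\<Sum>(j,i)\<in>{(j,i). j < i}. (f j i + f i j) *\<^sub>R (sgn (x j - x i) *\<^sub>R gam j i))"
  proof (intro sum.cong refl, clarify)
    fix j i :: 'n
    assume "j < i"
    then have swap: "gam i j = - gam j i"
      by (intro gam_swap) simp
    show "f j i *\<^sub>R gam j i + f i j *\<^sub>R gam i j = (f j i + f i j) *\<^sub>R (sgn (x j - x i) *\<^sub>R gam j i)"
    proof (cases "x j" "x i" rule: linorder_cases)
      case less
      then have "f j i = 0"
        using down[of j i] by fastforce
      then show ?thesis
        using less by (simp add: swap)
    next
      case equal
      then have "f j i = 0" "f i j = 0"
        using down[of j i] down[of i j] by fastforce+
      then show ?thesis
        by simp
    next
      case greater
      then have "f i j = 0"
        using down[of i j] by fastforce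
      then show ?thesis
        using greater by simp
    qed
  qed
  finally show ?thesis .
qed

lemma cone_sum_downhill:
  fixes x :: "'n::{finite,linorder} \<Rightarrow> real"
  assumes c: "\<And>j i. j < i \<Longrightarrow> 0 \<le> c j i"
  shows "downhill x (\<Sum>(j,i)\<in>{(j,i). j < i}. c j i *\<^sub>R (sgn (x j - x i) *\<^sub>R gam j i))"
proof -
  let ?v = "\<Sum>(j,i)\<in>{(j,i). j < i}. (c j i * sgn (x j - x i)) *\<^sub>R gam j i"
  have "(\<Sum>k\<in>S. ?v $ k) \<le> 0" if "up_closed x S" for S
    unfolding sum_gam_combination
  proof (intro sum_nonpos, clarify)
    fix j i :: 'n
    assume "j < i"
    have "sgn (x j - x i) * (of_bool (i \<in> S) - of_bool (j \<in> S)) \<le> (0::real)"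
      using \<open>up_closed x S\<close> by (cases "x j" "x i" rule: linorder_cases) (auto simp: up_closed_def)
    then show "c j i * sgn (x j - x i) * (of_bool (i \<in> S) - of_bool (j \<in> S)) \<le> 0"
      using c[OF \<open>j < i\<close>] by (simp add: mult.assoc mult_nonneg_nonpos)
  qed
  moreover have "(\<Sum>k\<in>UNIV. ?v $ k) = 0"
    unfolding sum_gam_combination by simp
  ultimately show ?thesis
    by (simp add: downhill_def scaleR_scaleR)
qed

lemma downhill_imp_cone_sum:
  fixes x :: "'n::{finite,linorder} \<Rightarrow> real"
  assumes "downhill x v"
  shows "\<exists>c. (\<forall>j i. 0 \<le> c j i \<and> c j i \<le> (\<Sum>k\<in>UNIV. \<bar>v $ k\<bar>)) \<and>
    v = (\<Sum>(j,i)\<in>{(j,i). j < i}. c j i *\<^sub>R (sgn (x j - x i) *\<^sub>R gam j i))"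
proof -
  obtain f where f_nonneg: "\<forall>a b. 0 \<le> f a b" and f_down: "\<forall>a b. f a b \<noteq> 0 \<longrightarrow> x b < x a"
    and f_sum: "v = (\<Sum>(a,b)\<in>UNIV. f a b *\<^sub>R gam a b)"
    and f_mass: "(\<Sum>(a,b)\<in>UNIV. f a b) \<le> (\<Sum>k\<in>UNIV. \<bar>v $ k\<bar>)"
    using downhill_flow_decomposition[OF assms] by blast
  have "f j i + f i j \<le> (\<Sum>k\<in>UNIV. \<bar>v $ k\<bar>)" for j i
  proof (cases "j = i")
    case True
    then have "f j i = 0" "f i j = 0"
      using f_down by auto
    then show ?thesis
      by (simp add: sum_nonneg)
  next
    case False
    then have "f j i + f i j = (\<Sum>p\<in>{(j, i), (i, j)}. case p of (a, b) \<Rightarrow> f a b)"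
      by auto
    also have "\<dots> \<le> (\<Sum>(a,b)\<in>UNIV. f a b)"
      using f_nonneg by (intro sum_mono2) auto
    finally show ?thesis
      using f_mass by linarith
  qed
  moreover have "v = (\<Sum>(j,i)\<in>{(j,i). j < i}. (f j i + f i j) *\<^sub>R (sgn (x j - x i) *\<^sub>R gam j i))"
    using f_sum flow_eq_cone_sum[of f x] f_down by auto
  ultimately show ?thesis
    using f_nonneg by (intro exI[of _ "\<lambda>j i. f j i + f i j"]) (simp add: add_nonneg_nonneg)
qed

section \<open>Lyapunov functions of the Kolmogorov equations\<close>

definition kolmogorov_solution ::
    "('n::{finite,linorder} \<Rightarrow> 'n \<Rightarrow> real) \<Rightarrow> (real, 'n) vec \<Rightarrow> (real \<Rightarrow> (real, 'n) vec) \<Rightarrow> bool" where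
  "kolmogorov_solution w Ps P \<longleftrightarrow>
     (\<forall>s\<ge>0. (P has_vector_derivative kfield w Ps (P s)) (at s within {0..}))"

lemma Phi_iff:
  "y \<in> Phi Ps P0 \<longleftrightarrow>
     (\<exists>w P t. (\<forall>i j. j < i \<longrightarrow> 0 \<le> w i j) \<and> P 0 = P0 \<and> kolmogorov_solution w Ps P \<and> 0 < t \<and> y = P t)"
  by (auto simp: Phi_def kolmogorov_solution_def)

lemma sum_mult_kfield:
  fixes P Ps :: "(real, 'n::{finite,linorder}) vec"
  shows "(\<Sum>k\<in>UNIV. a k * kfield w Ps P $ k)
     = (\<Sum>(j,i)\<in>{(j,i). j < i}. w i j * (P $ j / Ps $ j - P $ i / Ps $ i) * (a i - a j))"
proof -
  have gam_sum: "(\<Sum>k\<in>UNIV. a k * gam j i $ k) = a i - a j" if "j < i" for j i :: 'n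
  proof -
    have "(\<Sum>k\<in>UNIV. a k * gam j i $ k) = (\<Sum>k\<in>UNIV. (if k = i then a k else 0) - (if k = j then a k else 0))"
      using that by (intro sum.cong) auto
    then show ?thesis
      by (simp add: sum_subtractf)
  qed
  have "(\<Sum>k\<in>UNIV. a k * kfield w Ps P $ k)
      = (\<Sum>k\<in>UNIV. \<Sum>(j,i)\<in>{(j,i). j < i}. w i j * (P $ j / Ps $ j - P $ i / Ps $ i) * (a k * gam j i $ k))"
    by (simp add: kfield_def sum_component sum_distrib_left case_prod_unfold mult_ac)
  also have "\<dots> = (\<Sum>(j,i)\<in>{(j,i). j < i}. w i j * (P $ j / Ps $ j - P $ i / Ps $ i) * (\<Sum>k\<in>UNIV. a k * gam j i $ k))"
    by (subst sum.swap) (simp add: sum_distrib_left case_prod_unfold)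
  also have "\<dots> = (\<Sum>(j,i)\<in>{(j,i). j < i}. w i j * (P $ j / Ps $ j - P $ i / Ps $ i) * (a i - a j))"
    by (intro sum.cong) (auto simp: gam_sum simp del: gam_nth)
  finally show ?thesis .
qed

lemma kfield_dissipative:
  fixes P Ps :: "(real, 'n::{finite,linorder}) vec"
  assumes w: "\<forall>i j. j < i \<longrightarrow> 0 \<le> w i j" and d: "mono d"
  shows "(\<Sum>k\<in>UNIV. d (P $ k / Ps $ k) * kfield w Ps P $ k) \<le> 0"
  unfolding sum_mult_kfield
proof (intro sum_nonpos, clarify)
  fix j i :: 'n
  assume "j < i"
  have "(u - v) * (d v - d u) \<le> 0" for u v
    using d by (cases u v rule: le_cases) (auto simp: mono_def mult_nonneg_nonpos mult_nonpos_nonneg)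
  then show "w i j * (P $ j / Ps $ j - P $ i / Ps $ i) * (d (P $ i / Ps $ i) - d (P $ j / Ps $ j)) \<le> 0"
    using w \<open>j < i\<close> by (simp add: mult.assoc mult_nonneg_nonpos)
qed

lemma has_real_derivative_vec_nth:
  assumes "(f has_vector_derivative f') F"
  shows "((\<lambda>s. f s $ k) has_real_derivative f' $ k) F"
proof -
  have "((\<lambda>s. f s $ k) has_derivative (\<lambda>h. (h *\<^sub>R f') $ k)) F"
    using bounded_linear.has_derivative[OF bounded_linear_vec_nth assms[unfolded has_vector_derivative_def]] .
  moreover have "(\<lambda>h. (h *\<^sub>R f') $ k) = (*) (f' $ k)"
    by (auto simp: mult.commute)
  ultimately show ?thesis
    by (simp add: has_field_derivative_def)
qed

lemma kolmogorov_lyapunov_nonincreasing: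
  fixes P :: "real \<Rightarrow> (real, 'n::{finite,linorder}) vec"
  assumes w: "\<forall>i j. j < i \<longrightarrow> 0 \<le> w i j" and sol: "kolmogorov_solution w Ps P"
    and phi: "\<And>y. (phi has_real_derivative d y) (at y)" and d: "mono d"
    and Ps: "\<forall>k. 0 < Ps $ k" and t: "0 \<le> t"
  shows "(\<Sum>k\<in>UNIV. Ps $ k * phi (P t $ k / Ps $ k)) \<le> (\<Sum>k\<in>UNIV. Ps $ k * phi (P 0 $ k / Ps $ k))"
proof -
  define g where "g s = (\<Sum>k\<in>UNIV. Ps $ k * phi (P s $ k / Ps $ k))" for s
  define g' where "g' s = (\<Sum>k\<in>UNIV. d (P s $ k / Ps $ k) * kfield w Ps (P s) $ k)" for s
  have g_deriv: "(g has_real_derivative g' s) (at s within {0..})" if "0 \<le> s" for s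
  proof -
    have "((\<lambda>s. P s $ k / Ps $ k) has_real_derivative kfield w Ps (P s) $ k / Ps $ k) (at s within {0..})" for k
      using has_real_derivative_vec_nth[of P] sol that Ps[rule_format, of k]
      by (auto intro!: derivative_eq_intros simp: kolmogorov_solution_def)
    then have "(g has_real_derivative
        (\<Sum>k\<in>UNIV. Ps $ k * (d (P s $ k / Ps $ k) * (kfield w Ps (P s) $ k / Ps $ k)))) (at s within {0..})"
      unfolding g_def by (intro DERIV_sum DERIV_cmult DERIV_chain2[OF phi])
    moreover have "(\<Sum>k\<in>UNIV. Ps $ k * (d (P s $ k / Ps $ k) * (kfield w Ps (P s) $ k / Ps $ k))) = g' s"
      unfolding g'_def using Ps by (intro sum.cong refl) (simp add: less_imp_neq[symmetric])
    ultimately show ?thesis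
      by simp
  qed
  have "g t \<le> g 0"
  proof (rule DERIV_nonpos_imp_decreasing_open[OF t])
    fix s :: real
    assume "0 < s" "s < t"
    then have "(g has_real_derivative g' s) (at s)"
      using g_deriv[of s] at_within_interior[of s "{0..}"] by (simp add: interior_real_atLeast)
    moreover have "g' s \<le> 0"
      unfolding g'_def using w d by (rule kfield_dissipative)
    ultimately show "\<exists>y. (g has_real_derivative y) (at s) \<and> y \<le> 0"
      by blast
  next
    show "continuous_on {0..t} g"
      by (rule DERIV_continuous_on[where D = g'], rule DERIV_subset[OF g_deriv]) auto
  qed
  then show ?thesis
    by (simp add: g_def)
qed

lemma kolmogorov_sum_preserved:
  fixes P :: "real \<Rightarrow> (real, 'n::{finite,linorder}) vec"
  assumes w: "\<forall>i j. j < i \<longrightarrow> 0 \<le> w i j" and sol: "kolmogorov_solution w Ps P"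
    and Ps: "\<forall>k. 0 < Ps $ k" and t: "0 \<le> t"
  shows "(\<Sum>k\<in>UNIV. P t $ k) = (\<Sum>k\<in>UNIV. P 0 $ k)"
proof -
  have mass: "(\<Sum>k\<in>UNIV. Ps $ k * (c * (P s $ k / Ps $ k))) = c * (\<Sum>k\<in>UNIV. P s $ k)" for c s
    using Ps by (simp add: sum_distrib_left less_imp_neq[symmetric] mult.left_commute)
  have "(\<Sum>k\<in>UNIV. Ps $ k * (c * (P t $ k / Ps $ k))) \<le> (\<Sum>k\<in>UNIV. Ps $ k * (c * (P 0 $ k / Ps $ k)))"
    for c
    by (rule kolmogorov_lyapunov_nonincreasing[OF w sol _ _ Ps t])
      (auto intro!: derivative_eq_intros simp: mono_def)
  then have "c * (\<Sum>k\<in>UNIV. P t $ k) \<le> c * (\<Sum>k\<in>UNIV. P 0 $ k)" for c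
    by (simp only: mass)
  from this[of 1] this[of "-1"] show ?thesis
    by linarith
qed

lemma softplus_bounds:
  fixes z :: real
  shows "max 0 z \<le> ln (1 + exp z)" "ln (1 + exp z) \<le> max 0 z + ln 2"
proof -
  have "exp z \<le> 1 + exp z"
    by simp
  then have "z \<le> ln (1 + exp z)"
    by (metis exp_gt_zero exp_le_cancel_iff exp_ln add_pos_pos zero_less_one)
  moreover have "0 \<le> ln (1 + exp z)"
    by (simp add: add_nonneg_nonneg)
  ultimately show "max 0 z \<le> ln (1 + exp z)"
    by simp
  have "1 + exp z \<le> 2 * exp (max 0 z)"
    by (simp add: max_def)
  then have "ln (1 + exp z) \<le> ln (2 * exp (max 0 z))"
    by (simp add: add_pos_pos)
  then show "ln (1 + exp z) \<le> max 0 z + ln 2"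
    by (simp add: ln_mult)
qed

text \<open>The hinge \<open>max 0 (y - c)\<close> is the limit \<open>\<epsilon> \<rightarrow> 0\<close> of the smooth convex functions
  \<open>\<epsilon> ln (1 + exp ((y - c)/\<epsilon>))\<close>, which lie within \<open>\<epsilon> ln 2\<close> of it.\<close>
lemma kolmogorov_hinge_nonincreasing:
  fixes P :: "real \<Rightarrow> (real, 'n::{finite,linorder}) vec"
  assumes w: "\<forall>i j. j < i \<longrightarrow> 0 \<le> w i j" and sol: "kolmogorov_solution w Ps P"
    and Ps: "\<forall>k. 0 < Ps $ k" and t: "0 \<le> t"
  shows "(\<Sum>k\<in>UNIV. Ps $ k * max 0 (P t $ k / Ps $ k - c)) \<le> (\<Sum>k\<in>UNIV. Ps $ k * max 0 (P 0 $ k / Ps $ k - c))"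
proof (rule field_le_epsilon)
  fix \<delta> :: real
  assume "0 < \<delta>"
  define C where "C = ln 2 * (\<Sum>k\<in>UNIV. Ps $ k)"
  have "0 < C"
    unfolding C_def using Ps by (intro mult_pos_pos sum_pos) auto
  define e where "e = \<delta> / C"
  have e: "0 < e"
    using \<open>0 < \<delta>\<close> \<open>0 < C\<close> by (simp add: e_def)
  define phi where "phi y = e * ln (1 + exp ((y - c) / e))" for y
  define d where "d y = exp ((y - c) / e) / (1 + exp ((y - c) / e))" for y
  have "(phi has_real_derivative d y) (at y)" for y
  proof -
    have "e + e * exp ((y - c) / e) = e * (1 + exp ((y - c) / e))"
      by (simp add: distrib_left)
    then have "e * exp ((y - c) / e) / (e + e * exp ((y - c) / e)) = d y"
      using e by (simp add: d_def)
    then show ?thesis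
      unfolding phi_def using e by (auto intro!: derivative_eq_intros simp: d_def add_pos_pos)
  qed
  moreover have "mono d"
  proof (rule monoI)
    fix y z :: real
    assume "y \<le> z"
    have frac_mono: "a / (1 + a) \<le> b / (1 + b)" if "0 \<le> a" "a \<le> b" for a b :: real
      using that by (simp add: field_simps)
    have "exp ((y - c) / e) \<le> exp ((z - c) / e)"
      using e \<open>y \<le> z\<close> by (simp add: divide_right_mono)
    then show "d y \<le> d z"
      unfolding d_def by (intro frac_mono) auto
  qed
  ultimately have lyap: "(\<Sum>k\<in>UNIV. Ps $ k * phi (P t $ k / Ps $ k)) \<le> (\<Sum>k\<in>UNIV. Ps $ k * phi (P 0 $ k / Ps $ k))"
    by (rule kolmogorov_lyapunov_nonincreasing[OF w sol _ _ Ps t])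
  have hinge_eq: "max 0 (y - c) = e * max 0 ((y - c) / e)" for y
    using e by (simp add: max_def field_simps)
  have phi_lower: "max 0 (y - c) \<le> phi y" for y
    unfolding hinge_eq phi_def using e softplus_bounds(1) by (intro mult_left_mono) auto
  have phi_upper: "phi y \<le> max 0 (y - c) + e * ln 2" for y
  proof -
    have "phi y \<le> e * (max 0 ((y - c) / e) + ln 2)"
      unfolding phi_def using e softplus_bounds(2) by (intro mult_left_mono) auto
    then show ?thesis
      by (simp add: hinge_eq distrib_left)
  qed
  have "(\<Sum>k\<in>UNIV. Ps $ k * max 0 (P t $ k / Ps $ k - c)) \<le> (\<Sum>k\<in>UNIV. Ps $ k * phi (P t $ k / Ps $ k))"
    using Ps phi_lower by (intro sum_mono mult_left_mono) (auto intro: less_imp_le)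
  also have "\<dots> \<le> (\<Sum>k\<in>UNIV. Ps $ k * phi (P 0 $ k / Ps $ k))"
    by (fact lyap)
  also have "\<dots> \<le> (\<Sum>k\<in>UNIV. Ps $ k * (max 0 (P 0 $ k / Ps $ k - c) + e * ln 2))"
    using Ps phi_upper by (intro sum_mono mult_left_mono) (auto intro: less_imp_le)
  also have "\<dots> = (\<Sum>k\<in>UNIV. Ps $ k * max 0 (P 0 $ k / Ps $ k - c)) + e * C"
    by (simp add: C_def distrib_left sum.distrib sum_distrib_left sum_distrib_right mult_ac)
  also have "e * C = \<delta>"
    using \<open>0 < C\<close> by (simp add: e_def)
  finally show "(\<Sum>k\<in>UNIV. Ps $ k * max 0 (P t $ k / Ps $ k - c)) \<le> (\<Sum>k\<in>UNIV. Ps $ k * max 0 (P 0 $ k / Ps $ k - c)) + \<delta>" .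
qed

text \<open>The value \<open>1\<close> keeps the minimum defined (and positive) when \<open>x\<close> is constant.\<close>
definition min_gap :: "('n::finite \<Rightarrow> real) \<Rightarrow> real" where
  "min_gap x = Min ((\<lambda>(j,i). \<bar>x j - x i\<bar>) ` {(j,i). x j \<noteq> x i} \<union> {1})"

lemma min_gap_pos: "0 < min_gap x"
  unfolding min_gap_def by (subst Min_gr_iff) auto

lemma min_gap_le: "x j \<noteq> x i \<Longrightarrow> min_gap x \<le> \<bar>x j - x i\<bar>"
  unfolding min_gap_def by (rule Min_le) auto

text \<open>For an up-closed \<open>S\<close> with least level \<open>c\<close> no value crosses \<open>c\<close>, so the mass gained by \<open>S\<close>
  is bounded by the increase of the hinge sum at \<open>c\<close>.\<close>
lemma hinge_dominated_imp_downhill: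
  fixes x z \<pi> :: "'n::finite \<Rightarrow> real"
  assumes \<pi>: "\<And>k. 0 \<le> \<pi> k"
    and total: "(\<Sum>k\<in>UNIV. \<pi> k * z k) = (\<Sum>k\<in>UNIV. \<pi> k * x k)"
    and hinge: "\<And>c. (\<Sum>k\<in>UNIV. \<pi> k * max 0 (z k - c)) \<le> (\<Sum>k\<in>UNIV. \<pi> k * max 0 (x k - c))"
    and close: "\<And>k. \<bar>z k - x k\<bar> < min_gap x / 2"
  shows "downhill x (\<chi> k. \<pi> k * (z k - x k))"
  unfolding downhill_def
proof (intro conjI allI impI)
  show "(\<Sum>k\<in>UNIV. (\<chi> k. \<pi> k * (z k - x k)) $ k) = 0"
    using total by (simp add: right_diff_distrib sum_subtractf)
next
  fix S
  assume S: "up_closed x S"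
  show "(\<Sum>k\<in>S. (\<chi> k. \<pi> k * (z k - x k)) $ k) \<le> 0"
  proof (cases "S = {}")
    case False
    define c where "c = Min (x ` S)"
    have "c \<in> x ` S"
      unfolding c_def using False by (intro Min_in) auto
    then obtain m where "m \<in> S" "x m = c"
      by auto
    have S_above: "c \<le> x k" if "k \<in> S" for k
      unfolding c_def using that by simp
    have S_contains: "k \<in> S" if "c < x k" for k
      using S \<open>m \<in> S\<close> \<open>x m = c\<close> that unfolding up_closed_def by blast
    define D where "D k = \<pi> k * max 0 (z k - c) - \<pi> k * max 0 (x k - c)" for k
    have D_above: "D k = \<pi> k * (z k - x k)" if "c < x k" for k
    proof -
      have "min_gap x \<le> x k - c"
        using min_gap_le[of x k m] that \<open>x m = c\<close> by auto
      then have "c < z k"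
        using close[of k] by linarith
      then show ?thesis
        using that by (simp add: D_def right_diff_distrib)
    qed
    have D_below: "D k = 0" if "x k < c" for k
    proof -
      have "min_gap x \<le> c - x k"
        using min_gap_le[of x m k] that \<open>x m = c\<close> by auto
      then have "z k < c"
        using close[of k] by linarith
      then show ?thesis
        using that by (simp add: D_def)
    qed
    have D_level: "D k = \<pi> k * max 0 (z k - x k)" if "x k = c" for k
      using that by (simp add: D_def)
    have "(\<Sum>k\<in>S. \<pi> k * (z k - x k)) \<le> (\<Sum>k\<in>S. D k)"
    proof (rule sum_mono)
      fix k assume "k \<in> S"
      then consider "c < x k" | "x k = c"
        using S_above by fastforce
      then show "\<pi> k * (z k - x k) \<le> D k"
        by cases (auto simp: D_above D_level \<pi> mult_left_mono)
    qed
    also have "\<dots> \<le> (\<Sum>k\<in>UNIV. D k)"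
    proof (rule sum_mono2)
      fix k assume "k \<in> UNIV - S"
      then consider "x k < c" | "x k = c"
        using S_contains by fastforce
      then show "0 \<le> D k"
        by cases (auto simp: D_below D_level \<pi>)
    qed auto
    also have "\<dots> \<le> 0"
      using hinge[of c] by (simp add: D_def sum_subtractf)
    finally show ?thesis
      by simp
  qed simp
qed

lemma Phi_near_imp_downhill:
  fixes Ps P0 y :: "(real, 'n::{finite,linorder}) vec"
  assumes Ps: "\<forall>k. 0 < Ps $ k" and y: "y \<in> Phi Ps P0"
    and close: "\<And>k. \<bar>y $ k / Ps $ k - P0 $ k / Ps $ k\<bar> < min_gap (\<lambda>k. P0 $ k / Ps $ k) / 2"
  shows "downhill (\<lambda>k. P0 $ k / Ps $ k) (y - P0)"
proof -
  obtain w P t where w: "\<forall>i j. j < i \<longrightarrow> 0 \<le> w i j" and P0: "P 0 = P0"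
    and sol: "kolmogorov_solution w Ps P" and t: "0 < t" and yt: "y = P t"
    using y unfolding Phi_iff by blast
  have Ps_nonzero: "Ps $ k \<noteq> 0" for k
    using Ps by (simp add: less_imp_neq[symmetric])
  then have Ps_cancel: "Ps $ k * (p $ k / Ps $ k) = p $ k" for p k
    by simp
  have "downhill (\<lambda>k. P0 $ k / Ps $ k) (\<chi> k. Ps $ k * (y $ k / Ps $ k - P0 $ k / Ps $ k))"
  proof (rule hinge_dominated_imp_downhill)
    show "(\<Sum>k\<in>UNIV. Ps $ k * (y $ k / Ps $ k)) = (\<Sum>k\<in>UNIV. Ps $ k * (P0 $ k / Ps $ k))"
      using kolmogorov_sum_preserved[OF w sol Ps, of t] t unfolding Ps_cancel yt P0 by simp
    show "(\<Sum>k\<in>UNIV. Ps $ k * max 0 (y $ k / Ps $ k - c)) \<le> (\<Sum>k\<in>UNIV. Ps $ k * max 0 (P0 $ k / Ps $ k - c))"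
      for c
      using kolmogorov_hinge_nonincreasing[OF w sol Ps, of t c] t by (simp add: yt P0)
  qed (use Ps close in \<open>auto intro: less_imp_le\<close>)
  also have "(\<chi> k. Ps $ k * (y $ k / Ps $ k - P0 $ k / Ps $ k)) = y - P0"
    by (simp add: vec_eq_iff right_diff_distrib Ps_nonzero)
  finally show ?thesis .
qed

section \<open>The exponential of a bounded linear map\<close>

lemma norm_funpow_le:
  fixes F :: "'a::real_normed_vector \<Rightarrow> 'a"
  assumes F: "\<And>y. norm (F y) \<le> K * norm y" and "0 \<le> K"
  shows "norm ((F ^^ n) z) \<le> K ^ n * norm z"
proof (induction n)
  case (Suc n)
  have "norm ((F ^^ Suc n) z) \<le> K * norm ((F ^^ n) z)"
    using F by simp
  also have "\<dots> \<le> K * (K ^ n * norm z)"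
    using Suc \<open>0 \<le> K\<close> by (intro mult_left_mono)
  finally show ?case
    by simp
qed simp

lemma summable_exp_series:
  fixes F :: "'a::banach \<Rightarrow> 'a"
  assumes F: "\<And>y. norm (F y) \<le> K * norm y" and "0 \<le> K"
    and a: "\<And>n. \<bar>a n\<bar> \<le> \<bar>t\<bar> ^ n / fact n"
  shows "summable (\<lambda>n. a n *\<^sub>R (F ^^ n) z)"
proof (rule summable_comparison_test'[where N = 0])
  have "summable (\<lambda>n. norm z * ((\<bar>t\<bar> * K) ^ n /\<^sub>R fact n))"
    by (intro summable_mult summable_exp_generic)
  then show "summable (\<lambda>n. norm z * (\<bar>t\<bar> * K) ^ n / fact n)"
    by (simp add: divide_inverse mult_ac)
  fix n
  have "norm (a n *\<^sub>R (F ^^ n) z) = \<bar>a n\<bar> * norm ((F ^^ n) z)"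
    by simp
  also have "\<dots> \<le> (\<bar>t\<bar> ^ n / fact n) * (K ^ n * norm z)"
    using a norm_funpow_le[OF F \<open>0 \<le> K\<close>] by (intro mult_mono) auto
  finally show "norm (a n *\<^sub>R (F ^^ n) z) \<le> norm z * (\<bar>t\<bar> * K) ^ n / fact n"
    by (simp add: power_mult_distrib mult_ac)
qed

definition exp_flow :: "('a::real_normed_vector \<Rightarrow> 'a) \<Rightarrow> 'a \<Rightarrow> real \<Rightarrow> 'a" where
  "exp_flow F z t = (\<Sum>n. (t ^ n / fact n) *\<^sub>R (F ^^ n) z)"

text \<open>The series \<open>\<phi>\<^sub>1(F) z = \<Sum>n. F\<^sup>n z / (n+1)!\<close> satisfies \<open>e\<^sup>F z = z + F (\<phi>\<^sub>1(F) z)\<close>.\<close>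
definition phi1 :: "('a::real_normed_vector \<Rightarrow> 'a) \<Rightarrow> 'a \<Rightarrow> 'a" where
  "phi1 F z = (\<Sum>n. (1 / fact (Suc n)) *\<^sub>R (F ^^ n) z)"

lemma exp_flow_0 [simp]: "exp_flow F z 0 = z"
proof -
  have "(\<lambda>n. (0 ^ n / fact n) *\<^sub>R (F ^^ n) z) = (\<lambda>n. if n = 0 then (F ^^ n) z else 0)"
    by (auto simp: power_0_left)
  then show ?thesis
    unfolding exp_flow_def using sums_single[of 0 "\<lambda>n. (F ^^ n) z"] by (simp add: sums_iff)
qed

lemma summable_phi1_series:
  fixes F :: "'a::banach \<Rightarrow> 'a"
  assumes F: "\<And>y. norm (F y) \<le> K * norm y" and "0 \<le> K"
  shows "summable (\<lambda>n. (1 / fact (Suc n)) *\<^sub>R (F ^^ n) z)"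
proof (rule summable_exp_series[OF F \<open>0 \<le> K\<close>, where t = 1])
  fix n
  have "fact n \<le> (fact (Suc n) :: real)"
    by (rule fact_mono) auto
  then show "\<bar>1 / fact (Suc n)\<bar> \<le> \<bar>1::real\<bar> ^ n / fact n"
    by (simp add: frac_le)
qed

lemma exp_flow_1:
  fixes F :: "'a::banach \<Rightarrow> 'a"
  assumes "bounded_linear F" and F: "\<And>y. norm (F y) \<le> K * norm y" and "0 \<le> K"
  shows "exp_flow F z 1 = z + F (phi1 F z)"
proof -
  define f where "f = (\<lambda>n. (1 ^ n / fact n) *\<^sub>R (F ^^ n) z)"
  have "summable f"
    unfolding f_def by (rule summable_exp_series[OF F \<open>0 \<le> K\<close>, where t = 1]) simp
  then have "(\<Sum>n. f (Suc n)) = suminf f - f 0"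
    by (rule suminf_split_head)
  moreover have "f 0 = z" "suminf f = exp_flow F z 1"
    by (simp_all add: f_def exp_flow_def)
  moreover have "F (phi1 F z) = (\<Sum>n. f (Suc n))"
  proof -
    have "F (phi1 F z) = (\<Sum>n. F ((1 / fact (Suc n)) *\<^sub>R (F ^^ n) z))"
      unfolding phi1_def by (rule bounded_linear.suminf[OF assms(1) summable_phi1_series[OF F \<open>0 \<le> K\<close>]])
    then show ?thesis
      by (simp add: f_def linear_simps(5)[OF assms(1)] del: fact_Suc)
  qed
  ultimately show ?thesis
    by simp
qed

lemma norm_phi1_diff_le:
  fixes F :: "'a::banach \<Rightarrow> 'a"
  assumes F: "\<And>y. norm (F y) \<le> K * norm y" and "0 \<le> K" "K \<le> 1/2"
  shows "norm (phi1 F z - z) \<le> 2 * K * norm z"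
proof -
  define g where "g = (\<lambda>n. (1 / fact (Suc n)) *\<^sub>R (F ^^ n) z)"
  have "summable g"
    unfolding g_def by (rule summable_phi1_series[OF F \<open>0 \<le> K\<close>])
  then have "(\<Sum>n. g (Suc n)) = suminf g - g 0"
    by (rule suminf_split_head)
  moreover have "g 0 = z" "suminf g = phi1 F z"
    by (simp_all add: g_def phi1_def)
  ultimately have diff: "phi1 F z - z = (\<Sum>n. g (Suc n))"
    by simp
  have g_le: "norm (g (Suc n)) \<le> norm z * K * K ^ n" for n
  proof -
    have "norm (g (Suc n)) = (1 / fact (Suc (Suc n))) * norm ((F ^^ Suc n) z)"
      by (simp add: g_def del: fact_Suc)
    also have "\<dots> \<le> 1 * (K ^ Suc n * norm z)"
    proof (intro mult_mono norm_funpow_le[OF F \<open>0 \<le> K\<close>])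
      show "1 / fact (Suc (Suc n)) \<le> (1::real)"
        by (simp add: fact_ge_1 del: fact_Suc)
    qed auto
    finally show ?thesis
      by (simp add: mult_ac)
  qed
  have geometric: "summable (\<lambda>n. norm z * K * K ^ n)"
    using assms(2,3) by (intro summable_mult summable_geometric) simp
  have "summable (\<lambda>n. norm (g (Suc n)))"
    by (rule summable_comparison_test'[OF geometric, where N = 0]) (simp add: g_le)
  then have "norm (phi1 F z - z) \<le> (\<Sum>n. norm z * K * K ^ n)"
    unfolding diff using g_le geometric by (intro order_trans[OF summable_norm suminf_le]) auto
  also have "\<dots> = norm z * K * (1 / (1 - K))"
    using assms(2,3) by (subst suminf_mult) (auto simp: suminf_geometric)
  also have "\<dots> \<le> norm z * K * 2"
    using assms(2,3) by (intro mult_left_mono) (auto simp: divide_simps)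
  finally show ?thesis
    by (simp add: mult_ac)
qed

lemma continuous_on_phi1:
  fixes F :: "'b::topological_space \<Rightarrow> 'a::banach \<Rightarrow> 'a"
  assumes cont: "\<And>n. continuous_on S (\<lambda>s. (F s ^^ n) z)"
    and F: "\<And>s y. s \<in> S \<Longrightarrow> norm (F s y) \<le> K * norm y" and "0 \<le> K" "K < 1"
  shows "continuous_on S (\<lambda>s. phi1 (F s) z)"
proof -
  define f where "f n s = (1 / fact (Suc n)) *\<^sub>R (F s ^^ n) z" for n s
  have limit: "uniform_limit S (\<lambda>n s. \<Sum>i<n. f i s) (\<lambda>s. \<Sum>i. f i s) sequentially"
  proof (rule Weierstrass_m_test)
    show "summable (\<lambda>n. norm z * K ^ n)"
      using assms(3,4) by (intro summable_mult summable_geometric) simp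
    fix n s
    assume "s \<in> S"
    have "1 / fact (Suc n) \<le> (1::real)"
      by (simp add: fact_ge_1 del: fact_Suc)
    then have "(1 / fact (Suc n)) * norm ((F s ^^ n) z) \<le> 1 * (K ^ n * norm z)"
      using norm_funpow_le[OF F[OF \<open>s \<in> S\<close>] \<open>0 \<le> K\<close>] by (intro mult_mono) auto
    then show "norm (f n s) \<le> norm z * K ^ n"
      by (simp add: f_def mult_ac del: fact_Suc)
  qed
  have "continuous_on S (\<lambda>s. \<Sum>i. f i s)"
    by (rule uniform_limit_theorem[OF _ limit])
      (auto intro!: always_eventually continuous_intros cont simp: f_def)
  then show ?thesis
    by (simp add: f_def phi1_def)
qed

lemma vec_eq_sum_axis: "(y :: (real, 'n::finite) vec) = (\<Sum>k\<in>UNIV. (y $ k) *\<^sub>R axis k 1)"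
  by (simp add: vec_eq_iff sum_component axis_def if_distrib cong: if_cong)

lemma exp_flow_has_vector_derivative:
  fixes F :: "(real, 'n::finite) vec \<Rightarrow> (real, 'n) vec"
  assumes lin: "bounded_linear F" and F: "\<And>y. norm (F y) \<le> K * norm y" and "0 \<le> K"
  shows "(exp_flow F z has_vector_derivative F (exp_flow F z t)) (at t)"
proof -
  define S where "S = exp_flow F z"
  define v where "v n = (F ^^ n) z" for n
  have summable: "summable (\<lambda>n. (t ^ n / fact n) *\<^sub>R v n)" for t
    unfolding v_def by (rule summable_exp_series[OF F \<open>0 \<le> K\<close>, where t = t]) (simp add: power_abs)
  have S_eq: "S t = (\<Sum>n. (t ^ n / fact n) *\<^sub>R v n)" for t
    by (simp add: S_def exp_flow_def v_def)
  have component: "((\<lambda>t. S t $ k) has_real_derivative F (S t) $ k) (at t)" for k t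
  proof -
    define c where "c n = v n $ k / fact n" for n
    have S_nth: "S t $ k = (\<Sum>n. c n * t ^ n)" for t
    proof -
      have "S t $ k = (\<Sum>n. ((t ^ n / fact n) *\<^sub>R v n) $ k)"
        unfolding S_eq using bounded_linear.suminf[OF bounded_linear_vec_nth summable[of t]] by simp
      then show ?thesis
        by (simp add: c_def mult.commute)
    qed
    have "summable (\<lambda>n. ((y ^ n / fact n) *\<^sub>R v n) $ k)" for y
      by (rule bounded_linear.summable[OF bounded_linear_vec_nth summable])
    then have "summable (\<lambda>n. c n * y ^ n)" for y
      by (simp add: c_def mult.commute)
    then have deriv: "((\<lambda>t. \<Sum>n. c n * t ^ n) has_real_derivative (\<Sum>n. diffs c n * t ^ n)) (at t)"
      by (rule termdiffs_strong_converges_everywhere)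
    have F_summable: "summable (\<lambda>n. (t ^ n / fact n) *\<^sub>R F (v n))"
      using bounded_linear.summable[OF lin summable[of t]] by (simp add: linear_simps(5)[OF lin])
    have "diffs c n * t ^ n = ((t ^ n / fact n) *\<^sub>R F (v n)) $ k" for n
      by (simp add: diffs_def c_def v_def field_simps del: of_nat_Suc)
    then have "(\<Sum>n. diffs c n * t ^ n) = (\<Sum>n. (t ^ n / fact n) *\<^sub>R F (v n)) $ k"
      by (simp add: bounded_linear.suminf[OF bounded_linear_vec_nth F_summable])
    also have "(\<Sum>n. (t ^ n / fact n) *\<^sub>R F (v n)) = F (S t)"
      unfolding S_eq using bounded_linear.suminf[OF lin summable[of t]] by (simp add: linear_simps(5)[OF lin])
    finally show ?thesis
      using deriv S_nth by simp
  qed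
  have "((\<lambda>s. (S s $ k) *\<^sub>R axis k (1::real)) has_vector_derivative (F (S t) $ k) *\<^sub>R axis k 1) (at t)" for k
    using has_vector_derivative_scaleR[OF component[of k t] has_vector_derivative_const[of "axis k 1"]] by simp
  then have "((\<lambda>s. \<Sum>k\<in>UNIV. (S s $ k) *\<^sub>R axis k (1::real)) has_vector_derivative
      (\<Sum>k\<in>UNIV. (F (S t) $ k) *\<^sub>R axis k (1::real))) (at t)"
    by (intro has_vector_derivative_sum)
  then show ?thesis
    unfolding S_def[symmetric] by (simp flip: vec_eq_sum_axis)
qed

section \<open>Reaching the small points of the cone\<close>

lemma bounded_linear_kfield:
  fixes w :: "'n::{finite,linorder} \<Rightarrow> 'n \<Rightarrow> real"
  shows "bounded_linear (kfield w Ps)"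
proof -
  have "bounded_linear (\<lambda>y :: (real, 'n) vec. y $ k / c)" for k and c :: real
    using bounded_linear_compose[OF bounded_linear_divide[of c] bounded_linear_vec_nth[of k]]
    by (simp add: o_def)
  then show ?thesis
    unfolding kfield_def case_prod_unfold by (intro bounded_linear_intros)
qed

lemma kolmogorov_exp_solution:
  assumes w: "\<forall>i j. j < i \<longrightarrow> 0 \<le> w i j"
  shows "P0 + kfield w Ps (phi1 (kfield w Ps) P0) \<in> Phi Ps P0"
proof -
  let ?F = "kfield w Ps"
  obtain K where K: "\<And>y. norm (?F y) \<le> norm y * K" and "0 < K"
    using bounded_linear.pos_bounded[OF bounded_linear_kfield] by blast
  have F: "norm (?F y) \<le> K * norm y" for y
    using K[of y] by (simp add: mult.commute)
  have "kolmogorov_solution w Ps (exp_flow ?F P0)"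
    unfolding kolmogorov_solution_def
    using exp_flow_has_vector_derivative[OF bounded_linear_kfield F] \<open>0 < K\<close>
    by (auto intro: has_vector_derivative_at_within)
  moreover have "exp_flow ?F P0 1 = P0 + ?F (phi1 ?F P0)"
    using exp_flow_1[OF bounded_linear_kfield F] \<open>0 < K\<close> by simp
  ultimately show ?thesis
    unfolding Phi_iff using w by (intro exI[of _ w] exI[of _ "exp_flow ?F P0"] exI[of _ 1]) auto
qed

definition inverse_sum :: "(real, 'n::finite) vec \<Rightarrow> real" where
  "inverse_sum Ps = (\<Sum>k\<in>UNIV. 1 / Ps $ k)"

lemma inverse_sum_pos: "\<forall>k. 0 < Ps $ k \<Longrightarrow> 0 < inverse_sum Ps"
  unfolding inverse_sum_def by (intro sum_pos) auto

lemma abs_ratio_diff_le: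
  assumes Ps: "\<forall>k. 0 < Ps $ k"
  shows "\<bar>y $ j / Ps $ j - y $ i / Ps $ i\<bar> \<le> 2 * inverse_sum Ps * norm y"
proof -
  have "\<bar>y $ l / Ps $ l\<bar> \<le> inverse_sum Ps * norm y" for l
  proof -
    have "1 / Ps $ l \<le> inverse_sum Ps"
      unfolding inverse_sum_def using Ps by (intro member_le_sum) (auto intro: less_imp_le)
    have "\<bar>y $ l / Ps $ l\<bar> = (1 / Ps $ l) * \<bar>y $ l\<bar>"
      using Ps[rule_format, of l] by (simp add: abs_div)
    also have "\<dots> \<le> inverse_sum Ps * norm y"
      using \<open>1 / Ps $ l \<le> inverse_sum Ps\<close> component_le_norm_cart[of y l] inverse_sum_pos[OF Ps]
      by (intro mult_mono) auto
    finally show ?thesis .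
  qed
  from this[of j] this[of i] show ?thesis
    by linarith
qed

lemma norm_gam_le: "norm (gam j i) \<le> 2"
proof -
  have "norm (gam j i) \<le> (\<Sum>k\<in>UNIV. \<bar>gam j i $ k\<bar>)"
    by (rule norm_le_l1_cart)
  also have "\<dots> = (\<Sum>k\<in>{i, j}. \<bar>gam j i $ k\<bar>)"
    by (rule sum.mono_neutral_right) auto
  also have "\<dots> \<le> 2"
    by (cases "i = j") auto
  finally show ?thesis .
qed

definition kfield_lipschitz :: "('n::{finite,linorder} \<Rightarrow> 'n \<Rightarrow> real) \<Rightarrow> (real, 'n) vec \<Rightarrow> real" where
  "kfield_lipschitz w Ps = 4 * inverse_sum Ps * (\<Sum>(j,i)\<in>{(j,i). j < i}. \<bar>w i j\<bar>)"

lemma kfield_lipschitz_nonneg: "\<forall>k. 0 < Ps $ k \<Longrightarrow> 0 \<le> kfield_lipschitz w Ps"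
  unfolding kfield_lipschitz_def using inverse_sum_pos[of Ps]
  by (intro mult_nonneg_nonneg sum_nonneg) auto

lemma norm_kfield_le:
  fixes Ps :: "(real, 'n::{finite,linorder}) vec"
  assumes Ps: "\<forall>k. 0 < Ps $ k"
  shows "norm (kfield w Ps y) \<le> kfield_lipschitz w Ps * norm y"
proof -
  have "norm (kfield w Ps y) \<le> (\<Sum>(j,i)\<in>{(j,i). j < i}. norm ((w i j * (y $ j / Ps $ j - y $ i / Ps $ i)) *\<^sub>R gam j i))"
    unfolding kfield_def case_prod_unfold by (rule norm_sum)
  also have "\<dots> \<le> (\<Sum>(j,i)\<in>{(j,i). j < i}. \<bar>w i j\<bar> * (4 * inverse_sum Ps * norm y))"
  proof (intro sum_mono, clarify)
    fix j i :: 'n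
    have "norm ((w i j * (y $ j / Ps $ j - y $ i / Ps $ i)) *\<^sub>R gam j i)
        = \<bar>w i j\<bar> * (\<bar>y $ j / Ps $ j - y $ i / Ps $ i\<bar> * norm (gam j i))"
      by (simp add: abs_mult)
    also have "\<dots> \<le> \<bar>w i j\<bar> * ((2 * inverse_sum Ps * norm y) * 2)"
      using abs_ratio_diff_le[OF Ps, of y j i] norm_gam_le[of j i] inverse_sum_pos[OF Ps]
      by (intro mult_left_mono mult_mono) auto
    finally show "norm ((w i j * (y $ j / Ps $ j - y $ i / Ps $ i)) *\<^sub>R gam j i)
        \<le> \<bar>w i j\<bar> * (4 * inverse_sum Ps * norm y)"
      by simp
  qed
  also have "\<dots> = (\<Sum>(j,i)\<in>{(j,i). j < i}. \<bar>w i j\<bar>) * (4 * inverse_sum Ps * norm y)"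
    by (simp add: sum_distrib_right case_prod_unfold)
  also have "\<dots> = kfield_lipschitz w Ps * norm y"
    by (simp add: kfield_lipschitz_def mult_ac)
  finally show ?thesis .
qed

lemma ratio_diff_phi1_kfield_le:
  fixes Ps P0 :: "(real, 'n::{finite,linorder}) vec"
  assumes Ps: "\<forall>k. 0 < Ps $ k" and small: "kfield_lipschitz w Ps \<le> 1/2"
  defines "Y \<equiv> phi1 (kfield w Ps) P0"
  shows "\<bar>(Y $ j / Ps $ j - Y $ i / Ps $ i) - (P0 $ j / Ps $ j - P0 $ i / Ps $ i)\<bar>
    \<le> 4 * inverse_sum Ps * kfield_lipschitz w Ps * norm P0"
proof -
  have "\<bar>(Y $ j / Ps $ j - Y $ i / Ps $ i) - (P0 $ j / Ps $ j - P0 $ i / Ps $ i)\<bar>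
      = \<bar>(Y - P0) $ j / Ps $ j - (Y - P0) $ i / Ps $ i\<bar>"
    by (simp add: diff_divide_distrib)
  also have "\<dots> \<le> 2 * inverse_sum Ps * norm (Y - P0)"
    by (rule abs_ratio_diff_le[OF Ps])
  also have "\<dots> \<le> 2 * inverse_sum Ps * (2 * kfield_lipschitz w Ps * norm P0)"
    unfolding Y_def using inverse_sum_pos[OF Ps]
    by (intro mult_left_mono norm_phi1_diff_le norm_kfield_le[OF Ps] kfield_lipschitz_nonneg[OF Ps] small) auto
  finally show ?thesis
    by (simp add: mult_ac)
qed

lemma continuous_on_kfield_iterate:
  fixes Ps z :: "(real, 'n::{finite,linorder}) vec"
  assumes Ps: "\<forall>k. 0 < Ps $ k"
  shows "continuous_on S (\<lambda>W :: (real, 'n \<times> 'n) vec. (kfield (\<lambda>i j. W $ (i, j)) Ps ^^ n) z)"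
proof (induction n)
  case (Suc n)
  have "Ps $ k \<noteq> 0" for k
    using Ps by (simp add: less_imp_neq[symmetric])
  with Suc show ?case
    unfolding funpow.simps o_def kfield_def case_prod_unfold by (intro continuous_intros) auto
qed simp

lemma sgn_mult_ge_half_abs:
  fixes a b d :: real
  assumes "\<bar>a - b\<bar> \<le> d / 2" "d \<le> \<bar>b\<bar>"
  shows "\<bar>b\<bar> / 2 \<le> sgn b * a"
  using assms by (auto simp: sgn_if abs_if split: if_splits)

lemma ratio_sign_phi1_kfield:
  fixes Ps P0 :: "(real, 'n::{finite,linorder}) vec" and w :: "'n \<Rightarrow> 'n \<Rightarrow> real"
  defines "x \<equiv> \<lambda>k. P0 $ k / Ps $ k" and "Y \<equiv> phi1 (kfield w Ps) P0"
  assumes Ps: "\<forall>k. 0 < Ps $ k" and small: "kfield_lipschitz w Ps \<le> 1/2"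
    and close: "4 * inverse_sum Ps * kfield_lipschitz w Ps * norm P0 \<le> min_gap x / 2"
    and "x j \<noteq> x i"
  shows "\<bar>x j - x i\<bar> / 2 \<le> sgn (x j - x i) * (Y $ j / Ps $ j - Y $ i / Ps $ i)"
proof (rule sgn_mult_ge_half_abs)
  show "\<bar>(Y $ j / Ps $ j - Y $ i / Ps $ i) - (x j - x i)\<bar> \<le> min_gap x / 2"
    using ratio_diff_phi1_kfield_le[OF Ps small, of P0 j i] close by (simp add: x_def Y_def)
  show "min_gap x \<le> \<bar>x j - x i\<bar>"
    using \<open>x j \<noteq> x i\<close> by (rule min_gap_le)
qed

lemma kfield_lipschitz_le:
  fixes Ps :: "(real, 'n::{finite,linorder}) vec"
  assumes Ps: "\<forall>k. 0 < Ps $ k" and w: "\<And>i j. j < i \<Longrightarrow> \<bar>w i j\<bar> \<le> B"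
  shows "kfield_lipschitz w Ps \<le> 4 * inverse_sum Ps * card {(j,i). j < (i::'n)} * B"
proof -
  have "(\<Sum>(j,i)\<in>{(j,i). j < i}. \<bar>w i j\<bar>) \<le> (\<Sum>(j,i)\<in>{(j,i). j < (i::'n)}. B)"
    using w by (intro sum_mono) auto
  then show ?thesis
    unfolding kfield_lipschitz_def using inverse_sum_pos[OF Ps]
    by (simp add: case_prod_unfold mult.assoc)
qed

lemma continuous_on_phi1_kfield:
  fixes Ps P0 :: "(real, 'n::{finite,linorder}) vec"
  assumes Ps: "\<forall>k. 0 < Ps $ k"
    and small: "\<And>W. W \<in> S \<Longrightarrow> kfield_lipschitz (\<lambda>i j. W $ (i, j)) Ps \<le> 1/2"
  shows "continuous_on S (\<lambda>W. phi1 (kfield (\<lambda>i j. W $ (i, j)) Ps) P0)"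
proof (rule continuous_on_phi1[where K = "1/2"])
  show "norm (kfield (\<lambda>i j. W $ (i, j)) Ps y) \<le> 1/2 * norm y" if "W \<in> S" for W y
    using norm_kfield_le[OF Ps] mult_right_mono[OF small[OF that] norm_ge_zero] by (rule order_trans)
qed (auto intro: continuous_on_kfield_iterate[OF Ps])

lemma cone_point_in_Phi_if_weights:
  fixes Ps P0 :: "(real, 'n::{finite,linorder}) vec" and w :: "'n \<Rightarrow> 'n \<Rightarrow> real"
  defines "x \<equiv> \<lambda>k. P0 $ k / Ps $ k" and "Y \<equiv> phi1 (kfield w Ps) P0"
  assumes w: "\<forall>i j. j < i \<longrightarrow> 0 \<le> w i j"
    and solves: "\<And>j i. j < i \<Longrightarrow> w i j * (Y $ j / Ps $ j - Y $ i / Ps $ i) = c j i * sgn (x j - x i)"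
  shows "P0 + (\<Sum>(j,i)\<in>{(j,i). j < i}. c j i *\<^sub>R (sgn (x j - x i) *\<^sub>R gam j i)) \<in> Phi Ps P0"
proof -
  have "kfield w Ps Y = (\<Sum>(j,i)\<in>{(j,i). j < i}. c j i *\<^sub>R (sgn (x j - x i) *\<^sub>R gam j i))"
    unfolding kfield_def by (intro sum.cong refl) (auto simp: solves)
  then show ?thesis
    using kolmogorov_exp_solution[OF w, of P0 Ps] by (simp add: Y_def)
qed

text \<open>Brouwer's theorem yields the weights: on a box of small weights the map sending \<open>w\<close> to
  the solution \<open>w'\<close> of the linear equations above, with \<open>Y\<close> computed from \<open>w\<close>, is continuous
  and maps the box into itself.\<close>
lemma cone_point_in_Phi:
  fixes Ps P0 :: "(real, 'n::{finite,linorder}) vec"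
  defines "x \<equiv> \<lambda>k. P0 $ k / Ps $ k"
  assumes Ps: "\<forall>k. 0 < Ps $ k"
    and c: "\<And>j i. 0 \<le> c j i" "\<And>j i. c j i \<le> r"
    and small: "8 * inverse_sum Ps * card {(j,i). j < (i::'n)} * r \<le> \<kappa> * min_gap x"
    and "\<kappa> \<le> 1/2" and close: "4 * inverse_sum Ps * \<kappa> * norm P0 \<le> min_gap x / 2"
  shows "P0 + (\<Sum>(j,i)\<in>{(j,i). j < i}. c j i *\<^sub>R (sgn (x j - x i) *\<^sub>R gam j i)) \<in> Phi Ps P0"
proof -
  have "0 < min_gap x" "0 < inverse_sum Ps"
    using min_gap_pos inverse_sum_pos[OF Ps] by auto
  have "0 \<le> r"
    using c order_trans by blast
  define relevant where "relevant p \<longleftrightarrow> snd p < fst p \<and> x (snd p) \<noteq> x (fst p)" for p :: "'n \<times> 'n"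
  define R :: "(real, 'n \<times> 'n) vec" where
    "R = (\<chi> p. if relevant p then 2 * c (snd p) (fst p) / \<bar>x (snd p) - x (fst p)\<bar> else 0)"
  define box where "box = cbox 0 R"
  have mem_box: "W \<in> box \<longleftrightarrow> (\<forall>p. 0 \<le> W $ p \<and> W $ p \<le> R $ p)" for W
    unfolding box_def mem_box_cart by simp
  have R_le: "R $ p \<le> 2 * r / min_gap x" for p
  proof (cases "relevant p")
    case True
    then have "min_gap x \<le> \<bar>x (snd p) - x (fst p)\<bar>"
      unfolding relevant_def by (intro min_gap_le) auto
    then show ?thesis
      using True \<open>0 < min_gap x\<close> \<open>0 \<le> r\<close> c by (auto simp: R_def intro!: frac_le)
  qed (use \<open>0 \<le> r\<close> \<open>0 < min_gap x\<close> in \<open>simp add: R_def\<close>)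
  define weights where "weights W = (\<lambda>i j. W $ (i, j))" for W :: "(real, 'n \<times> 'n) vec"
  have lipschitz_le: "kfield_lipschitz (weights W) Ps \<le> \<kappa>" if "W \<in> box" for W
  proof -
    have "kfield_lipschitz (weights W) Ps \<le> 4 * inverse_sum Ps * card {(j,i). j < (i::'n)} * (2 * r / min_gap x)"
      using that R_le unfolding mem_box weights_def
      by (intro kfield_lipschitz_le[OF Ps]) (metis abs_of_nonneg order_trans)
    also have "\<dots> \<le> \<kappa>"
      using small \<open>0 < min_gap x\<close> by (simp add: field_simps)
    finally show ?thesis .
  qed
  define h where "h j i W = phi1 (kfield (weights W) Ps) P0 $ j / Ps $ j
    - phi1 (kfield (weights W) Ps) P0 $ i / Ps $ i" for j i W
  have h_sign: "\<bar>x j - x i\<bar> / 2 \<le> sgn (x j - x i) * h j i W" if "W \<in> box" "x j \<noteq> x i" for j i W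
  proof -
    have "4 * inverse_sum Ps * kfield_lipschitz (weights W) Ps * norm P0 \<le> 4 * inverse_sum Ps * \<kappa> * norm P0"
      using lipschitz_le[OF that(1)] \<open>0 < inverse_sum Ps\<close> by (intro mult_right_mono) auto
    then show ?thesis
      unfolding h_def x_def using lipschitz_le[OF that(1)] \<open>\<kappa> \<le> 1/2\<close> close that(2)
      by (intro ratio_sign_phi1_kfield[OF Ps]) (auto simp: x_def)
  qed
  have h_pos: "0 < sgn (x j - x i) * h j i W" if "W \<in> box" "x j \<noteq> x i" for j i W
    using h_sign[OF that] that(2) by (meson half_gt_zero less_le_trans zero_less_abs_iff right_minus_eq)
  define T where "T W = (\<chi> p. if relevant p then
      c (snd p) (fst p) / (sgn (x (snd p) - x (fst p)) * h (snd p) (fst p) W) else 0)" for W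
  have T_box: "T W \<in> box" if "W \<in> box" for W
    unfolding mem_box
  proof
    fix p :: "'n \<times> 'n"
    show "0 \<le> T W $ p \<and> T W $ p \<le> R $ p"
    proof (cases "relevant p")
      case True
      let ?u = "\<bar>x (snd p) - x (fst p)\<bar>"
      let ?s = "sgn (x (snd p) - x (fst p)) * h (snd p) (fst p) W"
      have "?u / 2 \<le> ?s" "0 < ?u" "0 < ?s"
        using h_sign[OF that] h_pos[OF that] True by (auto simp: relevant_def)
      have T_eq: "T W $ p = c (snd p) (fst p) / ?s" and R_eq: "R $ p = c (snd p) (fst p) / (?u / 2)"
        using True by (simp_all add: T_def R_def)
      have "c (snd p) (fst p) / ?s \<le> c (snd p) (fst p) / (?u / 2)"
        using \<open>?u / 2 \<le> ?s\<close> \<open>0 < ?s\<close> \<open>0 < ?u\<close> c by (intro divide_left_mono) simp_all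
      moreover have "0 \<le> c (snd p) (fst p) / ?s"
        using \<open>0 < ?s\<close> c by simp
      ultimately show ?thesis
        unfolding T_eq R_eq by blast
    qed (simp add: T_def R_def)
  qed
  have T_cont: "continuous_on box T"
    unfolding T_def
  proof (intro continuous_on_vec_lambda)
    fix p :: "'n \<times> 'n"
    have "kfield_lipschitz (\<lambda>i j. W $ (i, j)) Ps \<le> 1/2" if "W \<in> box" for W
      using lipschitz_le[OF that, unfolded weights_def] \<open>\<kappa> \<le> 1/2\<close> by linarith
    then have "continuous_on box (\<lambda>W. phi1 (kfield (weights W) Ps) P0)"
      unfolding weights_def by (rule continuous_on_phi1_kfield[OF Ps])
    moreover have "sgn (x (snd p) - x (fst p)) * h (snd p) (fst p) W \<noteq> 0" if "W \<in> box" "relevant p" for W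
      using h_pos[OF that(1)] that(2) unfolding relevant_def by (metis less_irrefl)
    ultimately show "continuous_on box (\<lambda>W. if relevant p then
        c (snd p) (fst p) / (sgn (x (snd p) - x (fst p)) * h (snd p) (fst p) W) else 0)"
      unfolding h_def using Ps
      by (cases "relevant p") (auto intro!: continuous_intros simp: less_imp_neq[symmetric])
  qed
  have "box \<noteq> {}"
    using mem_box[of 0] R_def c by (auto intro!: divide_nonneg_nonneg)
  then obtain W where "W \<in> box" and W_fixed: "T W = W"
    using brouwer[of box T] T_cont T_box unfolding box_def by (auto intro: compact_cbox convex_box)
  show ?thesis
    unfolding x_def
  proof (rule cone_point_in_Phi_if_weights)
    show "\<forall>i j. j < i \<longrightarrow> 0 \<le> weights W i j"
      using \<open>W \<in> box\<close> unfolding mem_box weights_def by auto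
    fix j i :: 'n
    assume "j < i"
    have "weights W i j = T W $ (i, j)"
      using W_fixed by (simp add: weights_def)
    also have "\<dots> = (if x j \<noteq> x i then c j i / (sgn (x j - x i) * h j i W) else 0)"
      using \<open>j < i\<close> by (simp add: T_def relevant_def)
    finally have W_ij: "weights W i j = (if x j \<noteq> x i then c j i / (sgn (x j - x i) * h j i W) else 0)" .
    have "weights W i j * h j i W = c j i * sgn (x j - x i)"
    proof (cases "x j = x i")
      case False
      then show ?thesis
        using h_pos[OF \<open>W \<in> box\<close> False] by (simp add: W_ij field_simps sgn_if split: if_splits)
    qed (simp add: W_ij)
    then show "weights W i j * (phi1 (kfield (weights W) Ps) P0 $ j / Ps $ j
        - phi1 (kfield (weights W) Ps) P0 $ i / Ps $ i) = c j i * sgn (P0 $ j / Ps $ j - P0 $ i / Ps $ i)"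
      by (simp add: h_def x_def)
  qed
qed

lemma small_cone_points_in_Phi:
  fixes Ps P0 :: "(real, 'n::{finite,linorder}) vec"
  assumes Ps: "\<forall>k. 0 < Ps $ k"
  shows "\<exists>r>0. \<forall>c. (\<forall>j i. 0 \<le> c j i \<and> c j i \<le> r) \<longrightarrow>
    P0 + (\<Sum>(j,i)\<in>{(j,i). j < i}. c j i *\<^sub>R (sgn (P0 $ j / Ps $ j - P0 $ i / Ps $ i) *\<^sub>R gam j i)) \<in> Phi Ps P0"
proof -
  define d where "d = min_gap (\<lambda>k. P0 $ k / Ps $ k)"
  define C where "C = inverse_sum Ps"
  define N where "N = real (card {(j,i). j < (i::'n)})"
  have "0 < d" "0 < C" "0 \<le> N"
    using min_gap_pos inverse_sum_pos[OF Ps] by (auto simp: d_def C_def N_def)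
  define \<kappa> where "\<kappa> = min (1/2) (d / (8 * C * norm P0 + 1))"
  define r where "r = \<kappa> * d / (8 * C * (N + 1))"
  have "0 < \<kappa>"
    using \<open>0 < d\<close> \<open>0 < C\<close> by (simp add: \<kappa>_def add_nonneg_pos)
  have "\<kappa> \<le> 1/2"
    unfolding \<kappa>_def by (rule min.cobounded1)
  have "0 < r"
    using \<open>0 < \<kappa>\<close> \<open>0 < d\<close> \<open>0 < C\<close> \<open>0 \<le> N\<close> by (simp add: r_def)
  have "8 * C * N * r \<le> 8 * C * (N + 1) * r"
    using \<open>0 < C\<close> \<open>0 < r\<close> by (intro mult_right_mono mult_left_mono) auto
  also have "\<dots> = \<kappa> * d"
    using \<open>0 < C\<close> \<open>0 \<le> N\<close> by (simp add: r_def)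
  finally have small: "8 * C * N * r \<le> \<kappa> * d" .
  have \<kappa>_le: "\<kappa> \<le> d / (8 * C * norm P0 + 1)"
    unfolding \<kappa>_def by (rule min.cobounded2)
  have "4 * C * \<kappa> * norm P0 = (4 * C * norm P0) * \<kappa>"
    by (simp add: mult_ac)
  also have "\<dots> \<le> (4 * C * norm P0) * (d / (8 * C * norm P0 + 1))"
    using \<kappa>_le \<open>0 < C\<close> by (intro mult_left_mono) auto
  also have "\<dots> \<le> d / 2"
  proof -
    have "0 < 8 * C * norm P0 + 1"
      using \<open>0 < C\<close> by (simp add: add_nonneg_pos)
    then show ?thesis
      using \<open>0 < d\<close> by (simp add: field_simps)
  qed
  finally have close: "4 * C * \<kappa> * norm P0 \<le> d / 2" .
  have "P0 + (\<Sum>(j,i)\<in>{(j,i). j < i}. c j i *\<^sub>R (sgn (P0 $ j / Ps $ j - P0 $ i / Ps $ i) *\<^sub>R gam j i)) \<in> Phi Ps P0"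
    if "\<forall>j i. 0 \<le> c j i \<and> c j i \<le> r" for c
    using cone_point_in_Phi[OF Ps, of c r \<kappa> P0] that small \<open>\<kappa> \<le> 1/2\<close> close
    by (simp add: d_def C_def N_def)
  with \<open>0 < r\<close> show ?thesis
    by blast
qed

lemma Qcone_small_in_Phi:
  fixes Ps P0 :: "(real, 'n::{finite,linorder}) vec"
  assumes Ps: "\<forall>k. 0 < Ps $ k"
  shows "\<exists>r>0. \<forall>q\<in>Qcone P0 Ps. (\<Sum>k\<in>UNIV. \<bar>q $ k\<bar>) < r \<longrightarrow> P0 + q \<in> Phi Ps P0"
proof -
  define x where "x = (\<lambda>k. P0 $ k / Ps $ k)"
  obtain r where "0 < r" and small_in_Phi: "\<forall>c. (\<forall>j i. 0 \<le> c j i \<and> c j i \<le> r) \<longrightarrow>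
      P0 + (\<Sum>(j,i)\<in>{(j,i). j < i}. c j i *\<^sub>R (sgn (x j - x i) *\<^sub>R gam j i)) \<in> Phi Ps P0"
    using small_cone_points_in_Phi[OF Ps, of P0] unfolding x_def by blast
  have "P0 + q \<in> Phi Ps P0" if "q \<in> Qcone P0 Ps" "(\<Sum>k\<in>UNIV. \<bar>q $ k\<bar>) < r" for q
  proof -
    have "downhill x q"
      using that(1) unfolding Qcone_def x_def by (blast intro: cone_sum_downhill)
    then obtain c where c: "\<forall>j i. 0 \<le> c j i \<and> c j i \<le> (\<Sum>k\<in>UNIV. \<bar>q $ k\<bar>)"
      and q: "q = (\<Sum>(j,i)\<in>{(j,i). j < i}. c j i *\<^sub>R (sgn (x j - x i) *\<^sub>R gam j i))"
      using downhill_imp_cone_sum by blast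
    from c that(2) have "\<forall>j i. 0 \<le> c j i \<and> c j i \<le> r"
      by (meson less_imp_le order_trans)
    then show ?thesis
      using small_in_Phi q by blast
  qed
  with \<open>0 < r\<close> show ?thesis
    by blast
qed

lemma Phi_near_in_Qcone:
  fixes Ps P0 y :: "(real, 'n::{finite,linorder}) vec"
  assumes Ps: "\<forall>k. 0 < Ps $ k" and "y \<in> Phi Ps P0"
    and "\<And>k. \<bar>y $ k / Ps $ k - P0 $ k / Ps $ k\<bar> < min_gap (\<lambda>k. P0 $ k / Ps $ k) / 2"
  shows "y - P0 \<in> Qcone P0 Ps"
proof -
  obtain c where "\<forall>j i. 0 \<le> c j i \<and> c j i \<le> (\<Sum>k\<in>UNIV. \<bar>(y - P0) $ k\<bar>)"
    and "y - P0 = (\<Sum>(j,i)\<in>{(j,i). j < i}. c j i *\<^sub>R (sgn (P0 $ j / Ps $ j - P0 $ i / Ps $ i) *\<^sub>R gam j i))"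
    using downhill_imp_cone_sum[OF Phi_near_imp_downhill[OF assms]] by blast
  then show ?thesis
    unfolding Qcone_def by blast
qed

theorem proposition2:
  fixes Ps P0 :: "(real, 'n::{finite,linorder}) vec"
  assumes "CARD('n) \<ge> 2"
    and "Ps \<in> simplex_pos"
    and "P0 \<in> simplex_pos"
  shows "\<exists>U. open U \<and> P0 \<in> U \<and>
           ((\<lambda>q. P0 + q) ` Qcone P0 Ps) \<inter> U = Phi Ps P0 \<inter> U"
proof -
  have Ps: "\<forall>k. 0 < Ps $ k"
    using assms(2) by (simp add: simplex_pos_def)
  then have Ps_nonzero: "Ps $ k \<noteq> 0" for k
    by (simp add: less_imp_neq[symmetric])
  obtain r where "0 < r" and small_in_Phi: "\<forall>q\<in>Qcone P0 Ps. (\<Sum>k\<in>UNIV. \<bar>q $ k\<bar>) < r \<longrightarrow> P0 + q \<in> Phi Ps P0"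
    using Qcone_small_in_Phi[OF Ps] by blast
  define d where "d = min_gap (\<lambda>k. P0 $ k / Ps $ k)"
  define U where "U = (\<Inter>k. {y. \<bar>y $ k / Ps $ k - P0 $ k / Ps $ k\<bar> < d / 2})
    \<inter> {y. (\<Sum>k\<in>UNIV. \<bar>y $ k - P0 $ k\<bar>) < r}"
  have "open {y :: (real, 'n) vec. \<bar>y $ k / Ps $ k - P0 $ k / Ps $ k\<bar> < d / 2}" for k
    using Ps_nonzero by (intro open_Collect_less continuous_intros) auto
  then have "open U"
    unfolding U_def by (intro open_Int open_INT open_Collect_less continuous_intros) auto
  moreover have "P0 \<in> U"
    using \<open>0 < r\<close> min_gap_pos by (simp add: U_def d_def)
  moreover have "P0 + q \<in> Phi Ps P0" if "q \<in> Qcone P0 Ps" "P0 + q \<in> U" for q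
    using small_in_Phi that by (simp add: U_def)
  moreover have "y \<in> (\<lambda>q. P0 + q) ` Qcone P0 Ps" if "y \<in> Phi Ps P0" "y \<in> U" for y
    using Phi_near_in_Qcone[OF Ps that(1)] that(2) by (force simp: U_def d_def intro: rev_image_eqI)
  ultimately show ?thesis
    by blast
qed

end
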